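(* Let $X$ be a topological space in which every open set is a union of countably many clopen sets. If $X$ is a QN space, then $X$ is a wQN$_*$ space.
   Context: Functions $f_n:X\to\mathbb{R}$ converge quasi-normally to $0$ if there are positive reals $\epsilon_n\to0$ such that for each $x\in X$, $|f_n(x)|<\epsilon_n$ for all but finitely many $n$. $X$ is a QN space if every sequence of continuous real-valued functions on $X$ converging pointwise to $0$ converges to $0$ quasi-normally. $X$ is wQN$_*$ if every sequence of lower semi-continuous real-valued functions on $X$ converging pointwise to $0$ has a subsequence converging to $0$ quasi-normally. *)

theory Defs
  imports "HOL-Analysis.Analysis"
begin

definition qn_converges :: "'a topology \<Rightarrow> (nat \<Rightarrow> 'a \<Rightarrow> real) \<Rightarrow> bool" where
  "qn_converges X f \<longleftrightarrow>
     (\<exists>\<epsilon>::nat \<Rightarrow> real. (\<forall>n. \<epsilon> n > 0) \<and> \<epsilon> \<longlonglongrightarrow> 0 \<and>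
        (\<forall>x\<in>topspace X. \<forall>\<^sub>F n in sequentially. \<bar>f n x\<bar> < \<epsilon> n))"

definition pointwise_to_zero :: "'a topology \<Rightarrow> (nat \<Rightarrow> 'a \<Rightarrow> real) \<Rightarrow> bool" where
  "pointwise_to_zero X f \<longleftrightarrow> (\<forall>x\<in>topspace X. (\<lambda>n. f n x) \<longlonglongrightarrow> 0)"

definition lower_semicontinuous_on :: "'a topology \<Rightarrow> ('a \<Rightarrow> real) \<Rightarrow> bool" where
  "lower_semicontinuous_on X g \<longleftrightarrow> (\<forall>a::real. openin X {x \<in> topspace X. a < g x})"

definition QN_space :: "'a topology \<Rightarrow> bool" where
  "QN_space X \<longleftrightarrow>
     (\<forall>f::nat \<Rightarrow> 'a \<Rightarrow> real. (\<forall>n. continuous_map X euclideanreal (f n)) \<and> pointwise_to_zero X f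
        \<longrightarrow> qn_converges X f)"

definition wQN_star_space :: "'a topology \<Rightarrow> bool" where
  "wQN_star_space X \<longleftrightarrow>
     (\<forall>f::nat \<Rightarrow> 'a \<Rightarrow> real. (\<forall>n. lower_semicontinuous_on X (f n)) \<and> pointwise_to_zero X f
        \<longrightarrow> (\<exists>s. strict_mono s \<and> qn_converges X (\<lambda>n. f (s n))))"

end

theory Submission
  imports Defs
begin

(*
  Structure of the proof.
  1. For a sequence of clopen sets A n, the "first index rank" x |-> 1/(n+1), n least with
     x in A n (0 if there is none), is continuous.  Applying QN to these ranks yields the
     combinatorial form of QN used below: if clopen sets D m n are, for each fixed n,
     eventually avoided by every point, then there are thresholds N m -> oo such that every
     point eventually avoids all D m n with n <= N m.
  2. Using the hypothesis on X, each open set is a disjoint union of a sequence of clopen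
     sets; truncating these decompositions with the thresholds of step 1 gives, for any
     sequence of open sets U p, clopen Z p \<subseteq> U p such that every point of U p lies in
     Z p for all large p.  A pairing function extends this to doubly indexed families.
  3. For lower semicontinuous f n the sets {f n > -1/(k+1)} and {f n > 1/(k+1)} are open;
     combining their clopen inner approximations into clopen sets E n k and applying
     step 1 once more bounds |f n x| by 1/(N n + 1) for large n.
*)

definition first_index_rank :: "(nat \<Rightarrow> 'a set) \<Rightarrow> 'a \<Rightarrow> real" where
  "first_index_rank A x =
     (if \<exists>n. x \<in> A n then 1 / real (Suc (LEAST n. x \<in> A n)) else 0)"

lemma first_index_rank_nonneg: "0 \<le> first_index_rank A x"
  by (simp add: first_index_rank_def)

lemma first_index_rank_ge_iff:
  fixes a :: real
  assumes "0 < a"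
  shows "a \<le> first_index_rank A x \<longleftrightarrow> (\<exists>n. x \<in> A n \<and> a \<le> 1 / real (Suc n))"
proof (cases "\<exists>n. x \<in> A n")
  case True
  define L where "L = (LEAST n. x \<in> A n)"
  have "x \<in> A L" unfolding L_def using True by (rule LeastI_ex)
  moreover have "1 / real (Suc n) \<le> 1 / real (Suc L)" if "x \<in> A n" for n
    using Least_le[of "\<lambda>n. x \<in> A n", OF that] unfolding L_def by (simp add: frac_le)
  ultimately show ?thesis using True unfolding first_index_rank_def L_def[symmetric]
    by (auto intro: order_trans)
qed (use assms in \<open>auto simp: first_index_rank_def\<close>)

lemma first_index_rank_gt_iff:
  fixes a :: real
  assumes "0 \<le> a"
  shows "a < first_index_rank A x \<longleftrightarrow> (\<exists>n. x \<in> A n \<and> a < 1 / real (Suc n))"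
proof (cases "\<exists>n. x \<in> A n")
  case True
  define L where "L = (LEAST n. x \<in> A n)"
  have "x \<in> A L" unfolding L_def using True by (rule LeastI_ex)
  moreover have "1 / real (Suc n) \<le> 1 / real (Suc L)" if "x \<in> A n" for n
    using Least_le[of "\<lambda>n. x \<in> A n", OF that] unfolding L_def by (simp add: frac_le)
  ultimately show ?thesis using True unfolding first_index_rank_def L_def[symmetric]
    by (auto intro: less_le_trans)
qed (use assms in \<open>auto simp: first_index_rank_def\<close>)

(* The rank of a sequence of clopen sets is continuous: its strict superlevel sets are unions
   of A n, and its strict sublevel sets for a > 0 are complements of finite unions of A n. *)
lemma first_index_rank_continuous:
  assumes "\<And>n. openin X (A n)" and "\<And>n. closedin X (A n)"
  shows "continuous_map X euclideanreal (first_index_rank A)"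
  unfolding continuous_map_upper_lower_semicontinuous_lt
proof (intro conjI allI)
  fix a :: real
  show "openin X {x \<in> topspace X. a < first_index_rank A x}"
  proof (cases "a < 0")
    case True
    then have "{x \<in> topspace X. a < first_index_rank A x} = topspace X"
      using first_index_rank_nonneg[of A] by (auto intro: less_le_trans)
    then show ?thesis by simp
  next
    case False
    then have "{x \<in> topspace X. a < first_index_rank A x} = (\<Union>n\<in>{n. a < 1 / real (Suc n)}. A n)"
      using first_index_rank_gt_iff[of a A] openin_subset[OF assms(1)] by auto
    then show ?thesis using assms(1) by auto
  qed
next
  fix a :: real
  show "openin X {x \<in> topspace X. first_index_rank A x < a}"
  proof (cases "a \<le> 0")
    case True
    then have "{x \<in> topspace X. first_index_rank A x < a} = {}"
      using first_index_rank_nonneg[of A] by (auto dest: le_less_trans)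
    then show ?thesis by (metis openin_empty)
  next
    case False
    (* Only the finitely many indices with 1/(n+1) \<ge> a matter. *)
    define I where "I = {n. a \<le> 1 / real (Suc n)}"
    have "I \<subseteq> {..nat \<lceil>1 / a\<rceil>}"
    proof
      fix n assume "n \<in> I"
      then have "real n \<le> 1 / a"
        using False by (simp add: I_def field_simps)
      then show "n \<in> {..nat \<lceil>1 / a\<rceil>}" by simp linarith
    qed
    then have "finite I" by (rule finite_subset) simp
    then have "closedin X (\<Union>n\<in>I. A n)"
      using assms(2) by (intro closedin_Union) auto
    moreover have "{x \<in> topspace X. first_index_rank A x < a} = topspace X - (\<Union>n\<in>I. A n)"
      using first_index_rank_ge_iff[of a A] False by (auto simp: I_def not_le[symmetric])
    ultimately show ?thesis by (simp add: openin_diff)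
  qed
qed

lemma first_index_rank_tendsto_zero:
  fixes D :: "nat \<Rightarrow> nat \<Rightarrow> 'a set"
  assumes "\<And>n. \<forall>\<^sub>F m in sequentially. x \<notin> D m n"
  shows "(\<lambda>m. first_index_rank (D m) x) \<longlonglongrightarrow> 0"
proof (rule tendstoI)
  fix r :: real assume "0 < r"
  then obtain K where K: "inverse (real (Suc K)) < r" using reals_Archimedean by blast
  have "\<forall>\<^sub>F m in sequentially. \<forall>i\<in>{..K}. x \<notin> D m i"
    using assms by (intro eventually_ball_finite) auto
  then show "\<forall>\<^sub>F m in sequentially. dist (first_index_rank (D m) x) 0 < r"
  proof (rule eventually_mono)
    fix m assume avoid: "\<forall>i\<in>{..K}. x \<notin> D m i"
    have "first_index_rank (D m) x < r"
    proof (rule ccontr)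
      assume "\<not> first_index_rank (D m) x < r"
      then obtain n where "x \<in> D m n" and "r \<le> 1 / real (Suc n)"
        using first_index_rank_ge_iff[OF \<open>0 < r\<close>, of "D m" x] by (auto simp: not_less)
      then have "1 / real (Suc K) < 1 / real (Suc n)" using K by (simp add: inverse_eq_divide)
      moreover have "1 / real (Suc n) \<le> 1 / real (Suc K)" if "K < n"
        using that by (simp add: frac_le)
      ultimately have "n \<le> K" by (meson leI not_le)
      then show False using avoid \<open>x \<in> D m n\<close> by blast
    qed
    then show "dist (first_index_rank (D m) x) 0 < r"
      using first_index_rank_nonneg[of "D m" x] by (simp add: dist_real_def)
  qed
qed

(* QN applied to the continuous ranks of clopen families: if each D m n is eventually
   avoided by every point, the avoidance can be made uniform in n \<le> N m with N m \<rightarrow> \<infinity>. *)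
lemma qn_clopen_family_avoidance:
  fixes D :: "nat \<Rightarrow> nat \<Rightarrow> 'a set"
  assumes qn: "QN_space X"
    and open_D: "\<And>m n. openin X (D m n)" and closed_D: "\<And>m n. closedin X (D m n)"
    and avoid: "\<And>x n. x \<in> topspace X \<Longrightarrow> \<forall>\<^sub>F m in sequentially. x \<notin> D m n"
  shows "\<exists>N. filterlim N at_top sequentially \<and>
             (\<forall>x\<in>topspace X. \<forall>\<^sub>F m in sequentially. \<forall>n\<le>N m. x \<notin> D m n)"
proof -
  define h where "h m = first_index_rank (D m)" for m
  have "qn_converges X h"
    using qn unfolding QN_space_def pointwise_to_zero_def h_def
    by (simp add: first_index_rank_continuous open_D closed_D first_index_rank_tendsto_zero avoid)
  then obtain \<epsilon> where \<epsilon>_pos: "\<And>m. 0 < \<epsilon> m" and \<epsilon>_lim: "\<epsilon> \<longlonglongrightarrow> 0"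
    and \<epsilon>_bound: "\<forall>x\<in>topspace X. \<forall>\<^sub>F m in sequentially. \<bar>h m x\<bar> < \<epsilon> m"
    unfolding qn_converges_def by blast
  (* N m + 1 = \<lfloor>1/\<epsilon> m\<rfloor>, so ranks 1/(n+1) with n \<le> N m are at least \<epsilon> m. *)
  define N where "N m = nat \<lfloor>1 / \<epsilon> m\<rfloor> - 1" for m
  have "filterlim N at_top sequentially"
    unfolding filterlim_at_top
  proof
    fix K :: nat
    have "\<forall>\<^sub>F m in sequentially. \<epsilon> m < 1 / real (K + 2)"
      using \<epsilon>_lim by (rule order_tendstoD) simp
    then show "\<forall>\<^sub>F m in sequentially. K \<le> N m"
    proof (rule eventually_mono)
      fix m assume "\<epsilon> m < 1 / real (K + 2)"
      then have "real (K + 2) < 1 / \<epsilon> m" using \<epsilon>_pos[of m] by (simp add: field_simps)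
      then show "K \<le> N m" unfolding N_def by linarith
    qed
  qed
  moreover have "\<forall>\<^sub>F m in sequentially. \<forall>n\<le>N m. x \<notin> D m n" if x: "x \<in> topspace X" for x
  proof -
    have "\<forall>\<^sub>F m in sequentially. \<epsilon> m < 1"
      using \<epsilon>_lim by (rule order_tendstoD) simp
    moreover have "\<forall>\<^sub>F m in sequentially. \<bar>h m x\<bar> < \<epsilon> m" using \<epsilon>_bound x by blast
    ultimately show ?thesis
    proof eventually_elim
      case (elim m)
      show ?case
      proof (intro allI impI notI)
        fix n assume "n \<le> N m" and "x \<in> D m n"
        have "1 \<le> 1 / \<epsilon> m" using elim(1) \<epsilon>_pos[of m] by (simp add: field_simps)
        then have "real (Suc n) \<le> 1 / \<epsilon> m" using \<open>n \<le> N m\<close> unfolding N_def by linarith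
        then have "\<epsilon> m \<le> 1 / real (Suc n)" using \<epsilon>_pos[of m] by (simp add: field_simps)
        also have "\<dots> \<le> h m x"
          unfolding h_def using \<open>x \<in> D m n\<close> by (subst first_index_rank_ge_iff) auto
        finally show False using elim(2) by linarith
      qed
    qed
  qed
  ultimately show ?thesis by blast
qed

definition open_sets_countable_clopen_unions :: "'a topology \<Rightarrow> bool" where
  "open_sets_countable_clopen_unions X \<longleftrightarrow>
     (\<forall>U. openin X U \<longrightarrow>
        (\<exists>\<C>. countable \<C> \<and> (\<forall>C\<in>\<C>. openin X C \<and> closedin X C) \<and> U = \<Union>\<C>))"

lemma open_disjoint_clopen_sequence:
  assumes "open_sets_countable_clopen_unions X" and "openin X U"
  shows "\<exists>D :: nat \<Rightarrow> 'a set. (\<forall>j. openin X (D j) \<and> closedin X (D j)) \<and> disjoint_family D \<and> (\<Union>j. D j) = U"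
proof -
  obtain \<C> where "countable \<C>" and clopen_\<C>: "\<forall>C\<in>\<C>. openin X C \<and> closedin X C" and "U = \<Union>\<C>"
    using assms unfolding open_sets_countable_clopen_unions_def by blast
  define C where "C = from_nat_into (insert {} \<C>)"
  have range_C: "range C = insert {} \<C>"
    unfolding C_def using \<open>countable \<C>\<close> by (intro range_from_nat_into) auto
  have clopen_C: "openin X (C j) \<and> closedin X (C j)" for j
  proof -
    have "C j \<in> insert {} \<C>" using range_C by blast
    then show ?thesis using clopen_\<C> by auto
  qed
  have clopen_disjointed: "openin X (disjointed C j) \<and> closedin X (disjointed C j)" for j
    unfolding disjointed_def using clopen_C
    by (intro conjI openin_diff closedin_diff openin_Union closedin_Union) auto
  have "(\<Union>j. disjointed C j) = U"
    unfolding UN_disjointed_eq using range_C \<open>U = \<Union>\<C>\<close> by simp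
  then show ?thesis
    using clopen_disjointed disjoint_family_disjointed[of C] by blast
qed

(* A point lies in at most one member of a disjoint sequence, hence eventually avoids it. *)
lemma disjoint_family_eventually_avoids:
  assumes "disjoint_family (D :: nat \<Rightarrow> 'a set)"
  shows "\<forall>\<^sub>F j in sequentially. x \<notin> D j"
proof (cases "\<exists>j. x \<in> D j")
  case True
  then obtain j0 where "x \<in> D j0" by blast
  then have "x \<notin> D j" if "j > j0" for j
    using assms that disjoint_family_onD[of D UNIV j0 j] by auto
  then show ?thesis by (auto simp: eventually_at_top_dense)
qed simp

lemma clopen_inner_approximation:
  assumes clopen_unions: "open_sets_countable_clopen_unions X" and qn: "QN_space X"
    and open_U: "\<And>p. openin X (U p)"
  shows "\<exists>Z. (\<forall>p. openin X (Z p) \<and> closedin X (Z p) \<and> Z p \<subseteq> U p) \<and>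
             (\<forall>x\<in>topspace X. \<forall>\<^sub>F p in sequentially. x \<in> U p \<longrightarrow> x \<in> Z p)"
proof -
  have "\<forall>p. \<exists>D :: nat \<Rightarrow> 'a set. (\<forall>j. openin X (D j) \<and> closedin X (D j)) \<and>
           disjoint_family D \<and> (\<Union>j. D j) = U p"
    using open_disjoint_clopen_sequence[OF clopen_unions open_U] by blast
  then obtain D :: "nat \<Rightarrow> nat \<Rightarrow> 'a set"
    where clopen_D: "\<And>p j. openin X (D p j) \<and> closedin X (D p j)"
      and disjoint_D: "\<And>p. disjoint_family (D p)" and cover_D: "\<And>p. (\<Union>j. D p j) = U p"
    by metis
  obtain N where N_lim: "filterlim N at_top sequentially"
    and N_avoid: "\<forall>x\<in>topspace X. \<forall>\<^sub>F j in sequentially. \<forall>p\<le>N j. x \<notin> D p j"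
    using qn_clopen_family_avoidance[of X "\<lambda>j p. D p j", OF qn]
      clopen_D disjoint_family_eventually_avoids[OF disjoint_D] by auto
  (* Choose cut-offs b p \<ge> p with p \<le> N j for j \<ge> b p: then every point avoids the pieces
     D p j with j \<ge> b p once p is large, so Z p keeps only the pieces below the cut-off. *)
  have "\<forall>p. \<exists>b\<ge>p. \<forall>j\<ge>b. p \<le> N j"
  proof
    fix p
    obtain b where "\<forall>j\<ge>b. p \<le> N j"
      using N_lim unfolding filterlim_at_top eventually_sequentially by blast
    then show "\<exists>b\<ge>p. \<forall>j\<ge>b. p \<le> N j" by (intro exI[of _ "max b p"]) auto
  qed
  then obtain b where b_ge: "\<And>p. p \<le> b p" and b_cut: "\<And>p j. b p \<le> j \<Longrightarrow> p \<le> N j"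
    by metis
  define Z where "Z p = (\<Union>j<b p. D p j)" for p
  have "openin X (Z p) \<and> closedin X (Z p) \<and> Z p \<subseteq> U p" for p
    unfolding Z_def using clopen_D cover_D[of p]
    by (intro conjI openin_Union closedin_Union) auto
  moreover have "\<forall>\<^sub>F p in sequentially. x \<in> U p \<longrightarrow> x \<in> Z p" if "x \<in> topspace X" for x
  proof -
    obtain M where M: "\<And>j p. M \<le> j \<Longrightarrow> p \<le> N j \<Longrightarrow> x \<notin> D p j"
      using N_avoid \<open>x \<in> topspace X\<close> unfolding eventually_sequentially by blast
    have "x \<in> Z p" if "M \<le> p" and "x \<in> U p" for p
    proof -
      obtain j where "x \<in> D p j" using \<open>x \<in> U p\<close> cover_D[of p] by blast
      moreover have "\<not> b p \<le> j"
        using M[of j p] b_cut[of p j] b_ge[of p] \<open>M \<le> p\<close> \<open>x \<in> D p j\<close> by linarith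
      ultimately show ?thesis unfolding Z_def by auto
    qed
    then show ?thesis unfolding eventually_sequentially by blast
  qed
  ultimately show ?thesis by blast
qed

lemma clopen_inner_approximation_double_index:
  fixes U :: "nat \<Rightarrow> nat \<Rightarrow> 'a set"
  assumes clopen_unions: "open_sets_countable_clopen_unions X" and qn: "QN_space X"
    and open_U: "\<And>n k. openin X (U n k)"
  shows "\<exists>Z. (\<forall>n k. openin X (Z n k) \<and> closedin X (Z n k) \<and> Z n k \<subseteq> U n k) \<and>
             (\<forall>x\<in>topspace X. \<forall>\<^sub>F n in sequentially. \<forall>k. x \<in> U n k \<longrightarrow> x \<in> Z n k)"
proof -
  define U' where "U' p = U (fst (prod_decode p)) (snd (prod_decode p))" for p
  obtain Z' where clopen_Z': "\<forall>p. openin X (Z' p) \<and> closedin X (Z' p) \<and> Z' p \<subseteq> U' p"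
    and inner_Z': "\<forall>x\<in>topspace X. \<forall>\<^sub>F p in sequentially. x \<in> U' p \<longrightarrow> x \<in> Z' p"
    using clopen_inner_approximation[of X U', OF clopen_unions qn] open_U
    unfolding U'_def by blast
  define Z where "Z n k = Z' (prod_encode (n, k))" for n k
  have U'_encode: "U' (prod_encode (n, k)) = U n k" for n k
    by (simp add: U'_def)
  have "openin X (Z n k) \<and> closedin X (Z n k) \<and> Z n k \<subseteq> U n k" for n k
    using clopen_Z' U'_encode unfolding Z_def by metis
  moreover have "\<forall>\<^sub>F n in sequentially. \<forall>k. x \<in> U n k \<longrightarrow> x \<in> Z n k" if x: "x \<in> topspace X" for x
  proof -
    (* The code of (n, k) is at least n, so one threshold serves all k. *)
    obtain M where M: "\<And>p. M \<le> p \<Longrightarrow> x \<in> U' p \<Longrightarrow> x \<in> Z' p"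
      using inner_Z' x unfolding eventually_sequentially by blast
    have "x \<in> Z n k" if "M \<le> n" and "x \<in> U n k" for n k
      unfolding Z_def using M[of "prod_encode (n, k)"] U'_encode[of n k] that le_prod_encode_1[of n k]
      by auto
    then show ?thesis unfolding eventually_sequentially by blast
  qed
  ultimately show ?thesis by (intro exI[of _ Z] conjI allI) auto
qed

lemma lower_semicontinuous_qn_converges:
  assumes clopen_unions: "open_sets_countable_clopen_unions X" and qn: "QN_space X"
    and lsc: "\<And>n. lower_semicontinuous_on X (f n)" and pointwise: "pointwise_to_zero X f"
  shows "qn_converges X f"
proof -
  define Above where "Above n k = {x \<in> topspace X. - (1 / real (Suc k)) < f n x}" for n k
  define Over where "Over n k = {x \<in> topspace X. 1 / real (Suc k) < f n x}" for n k
  have open_Above: "openin X (Above n k)" and open_Over: "openin X (Over n k)" for n k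
    using lsc unfolding Above_def Over_def lower_semicontinuous_on_def by blast+
  obtain A where clopen_A: "\<And>n k. openin X (A n k) \<and> closedin X (A n k) \<and> A n k \<subseteq> Above n k"
    and inner_A: "\<forall>x\<in>topspace X. \<forall>\<^sub>F n in sequentially. \<forall>k. x \<in> Above n k \<longrightarrow> x \<in> A n k"
    using clopen_inner_approximation_double_index[of X Above, OF clopen_unions qn open_Above]
    by blast
  obtain B where clopen_B: "\<And>n k. openin X (B n k) \<and> closedin X (B n k) \<and> B n k \<subseteq> Over n k"
    and inner_B: "\<forall>x\<in>topspace X. \<forall>\<^sub>F n in sequentially. \<forall>k. x \<in> Over n k \<longrightarrow> x \<in> B n k"
    using clopen_inner_approximation_double_index[of X Over, OF clopen_unions qn open_Over]
    by blast
  (* x \<notin> E n k means x \<in> A n k, so f n x > -1/(k+1), and x \<notin> B n k, which for large n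
     forces f n x \<le> 1/(k+1). *)
  define E where "E n k = (topspace X - A n k) \<union> B n k" for n k
  have clopen_E: "openin X (E n k)" "closedin X (E n k)" for n k
    unfolding E_def using clopen_A[of n k] clopen_B[of n k]
    by (simp_all add: openin_Un openin_diff closedin_Un closedin_diff)
  have avoid_E: "\<forall>\<^sub>F n in sequentially. x \<notin> E n k" if x: "x \<in> topspace X" for x k
  proof -
    have "(\<lambda>n. f n x) \<longlonglongrightarrow> 0"
      using pointwise x unfolding pointwise_to_zero_def by blast
    then have "(\<lambda>n. \<bar>f n x\<bar>) \<longlonglongrightarrow> 0" by (rule tendsto_rabs_zero)
    then have "\<forall>\<^sub>F n in sequentially. \<bar>f n x\<bar> < 1 / real (Suc k)"
      by (rule order_tendstoD) simp
    moreover have "\<forall>\<^sub>F n in sequentially. \<forall>k. x \<in> Above n k \<longrightarrow> x \<in> A n k"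
      using inner_A x by blast
    ultimately show ?thesis
    proof eventually_elim
      case (elim n)
      then have "x \<in> A n k" using x by (auto simp: Above_def)
      moreover have "x \<notin> B n k" using clopen_B[of n k] elim(1) by (auto simp: Over_def)
      ultimately show ?case by (simp add: E_def)
    qed
  qed
  obtain N where N_lim: "filterlim N at_top sequentially"
    and N_avoid: "\<forall>x\<in>topspace X. \<forall>\<^sub>F n in sequentially. \<forall>k\<le>N n. x \<notin> E n k"
    using qn_clopen_family_avoidance[of X E, OF qn clopen_E avoid_E] by blast
  have "(\<lambda>n. 2 / real (Suc (N n))) \<longlonglongrightarrow> 0"
  proof (rule tendsto_divide_0[OF tendsto_const])
    show "filterlim (\<lambda>n. real (Suc (N n))) at_infinity sequentially"
      using filterlim_compose[OF filterlim_real_sequentially filterlim_compose[OF filterlim_Suc N_lim]]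
      by (intro filterlim_at_top_imp_at_infinity) simp
  qed
  moreover have "\<forall>\<^sub>F n in sequentially. \<bar>f n x\<bar> < 2 / real (Suc (N n))" if x: "x \<in> topspace X" for x
  proof -
    have "\<forall>\<^sub>F n in sequentially. \<forall>k. x \<in> Over n k \<longrightarrow> x \<in> B n k"
      using inner_B x by blast
    moreover have "\<forall>\<^sub>F n in sequentially. \<forall>k\<le>N n. x \<notin> E n k"
      using N_avoid x by blast
    ultimately show ?thesis
    proof eventually_elim
      case (elim n)
      then have "x \<notin> E n (N n)" by blast
      then have "x \<in> A n (N n)" and "x \<notin> B n (N n)" using x by (auto simp: E_def)
      then have "x \<in> Above n (N n)" and "x \<notin> Over n (N n)"
        using clopen_A elim(1) by blast+
      then have "\<bar>f n x\<bar> \<le> 1 / real (Suc (N n))" using x by (auto simp: Above_def Over_def)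
      also have "\<dots> < 2 / real (Suc (N n))" by (simp add: divide_strict_right_mono)
      finally show ?case .
    qed
  qed
  ultimately show ?thesis unfolding qn_converges_def
    by (intro exI[of _ "\<lambda>n. 2 / real (Suc (N n))"]) auto
qed

theorem mainTheorem12:
  fixes X :: "'a topology"
  assumes "\<forall>U. openin X U \<longrightarrow>
             (\<exists>\<C>. countable \<C> \<and> (\<forall>C\<in>\<C>. openin X C \<and> closedin X C) \<and> U = \<Union>\<C>)"
    and "QN_space X"
  shows "wQN_star_space X"
  unfolding wQN_star_space_def
proof (intro allI impI)
  fix f :: "nat \<Rightarrow> 'a \<Rightarrow> real"
  assume "(\<forall>n. lower_semicontinuous_on X (f n)) \<and> pointwise_to_zero X f"
  moreover have "open_sets_countable_clopen_unions X"
    using assms(1) unfolding open_sets_countable_clopen_unions_def .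
  ultimately have "qn_converges X f"
    using lower_semicontinuous_qn_converges[OF _ assms(2)] by blast
  then show "\<exists>s. strict_mono s \<and> qn_converges X (\<lambda>n. f (s n))"
    by (intro exI[of _ id]) (simp add: strict_mono_def)
qed

end
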